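(* Let $\Omega\subset\mathbb{R}^2$ be open, $\lambda>0$, and let $u\in L^2(\Omega)$ satisfy $-\Delta u=\lambda u$ in $\Omega$. Suppose $\Gamma^+,\Gamma^-\subset\Omega$ are two singular lines of $u$ with $\Gamma^+\cap\Gamma^-=\{\mathbf{x}_0\}$, $\mathbf{x}_0\in\Omega$, forming at $\mathbf{x}_0$ the angle $\angle(\Gamma^+,\Gamma^-)=\alpha\cdot 2\pi$, where $\alpha\in(0,1)$ is irrational. Then $\mathrm{Vani}(u;\mathbf{x}_0)=0$ if $u(\mathbf{x}_0)\neq 0$, and $\mathrm{Vani}(u;\mathbf{x}_0)=+\infty$ if $u(\mathbf{x}_0)=0$. Moreover, if $u(\mathbf{x}_0)\neq0$, then in a neighborhood of $\mathbf{x}_0$ one has $u(\mathbf{x})=u(\mathbf{x}_0)J_0(\sqrt{\lambda}\,r)$ for $\mathbf{x}=\mathbf{x}_0+r(\cos\theta,\sin\theta)$, where $J_0$ is the Bessel function of the first kind of order zero.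
   Context: No boundary condition is imposed on $\partial\Omega$; $u$ is real-analytic in $\Omega$. A line segment $\Gamma\subset\Omega$ is a singular line of $u$ if $\partial_\nu u=0$ on $\Gamma$, where $\nu$ is a unit normal vector to $\Gamma$. Vanishing order: writing $u(\mathbf{x}_0+\mathbf{y})=\sum_{m\ge0}P_m(\mathbf{y})$ with $P_m$ homogeneous of degree $m$, $\mathrm{Vani}(u;\mathbf{x}_0)$ is the smallest $m$ with $P_m\not\equiv0$ ($+\infty$ if none). *)

theory Defs
  imports "HOL-Analysis.Analysis" "HOL-Library.Extended_Nat"
begin

definition hom_part :: "(nat \<Rightarrow> nat \<Rightarrow> real) \<Rightarrow> nat \<Rightarrow> real \<times> real \<Rightarrow> real" where
  "hom_part c m y = (\<Sum>j\<le>m. c m j * fst y ^ j * snd y ^ (m - j))"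

definition power_expansion_at ::
  "(real \<times> real \<Rightarrow> real) \<Rightarrow> real \<times> real \<Rightarrow> (nat \<Rightarrow> nat \<Rightarrow> real) \<Rightarrow> real \<Rightarrow> bool" where
  "power_expansion_at u x0 c r \<longleftrightarrow> r > 0 \<and>
     (\<forall>y. norm y < r \<longrightarrow>
        summable (\<lambda>m. \<Sum>j\<le>m. \<bar>c m j\<bar> * \<bar>fst y\<bar> ^ j * \<bar>snd y\<bar> ^ (m - j)) \<and>
        (\<lambda>m. hom_part c m y) sums u (x0 + y))"

definition real_analytic_on :: "(real \<times> real) set \<Rightarrow> (real \<times> real \<Rightarrow> real) \<Rightarrow> bool" where
  "real_analytic_on \<Omega> u \<longleftrightarrow> (\<forall>x0\<in>\<Omega>. \<exists>c r. power_expansion_at u x0 c r)"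

definition vani :: "(real \<times> real \<Rightarrow> real) \<Rightarrow> real \<times> real \<Rightarrow> enat" where
  "vani u x0 = (let c = (SOME c. \<exists>r. power_expansion_at u x0 c r) in
      if \<exists>m y. hom_part c m y \<noteq> 0
      then enat (LEAST m. \<exists>y. hom_part c m y \<noteq> 0) else \<infinity>)"

definition partial1 :: "(real \<times> real \<Rightarrow> real) \<Rightarrow> real \<times> real \<Rightarrow> real" where
  "partial1 u x = deriv (\<lambda>t. u (t, snd x)) (fst x)"

definition partial2 :: "(real \<times> real \<Rightarrow> real) \<Rightarrow> real \<times> real \<Rightarrow> real" where
  "partial2 u x = deriv (\<lambda>t. u (fst x, t)) (snd x)"

definition laplacian :: "(real \<times> real \<Rightarrow> real) \<Rightarrow> real \<times> real \<Rightarrow> real" where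
  "laplacian u x = partial1 (partial1 u) x + partial2 (partial2 u) x"

definition dir_deriv :: "(real \<times> real \<Rightarrow> real) \<Rightarrow> real \<times> real \<Rightarrow> real \<times> real \<Rightarrow> real" where
  "dir_deriv u x v = deriv (\<lambda>t. u (x + t *\<^sub>R v)) 0"

definition singular_line ::
  "(real \<times> real) set \<Rightarrow> (real \<times> real \<Rightarrow> real) \<Rightarrow> (real \<times> real) set \<Rightarrow> bool" where
  "singular_line \<Omega> u \<Gamma> \<longleftrightarrow> (\<exists>a b. a \<noteq> b \<and> \<Gamma> = closed_segment a b \<and> \<Gamma> \<subseteq> \<Omega> \<and>
     (let \<nu> = (1 / norm (b - a)) *\<^sub>R (- snd (b - a), fst (b - a)) in
       \<forall>x\<in>\<Gamma>. dir_deriv u x \<nu> = 0))"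

definition bessel_J0 :: "real \<Rightarrow> real" where
  "bessel_J0 x = (\<Sum>m. (-1) ^ m / (fact m)^2 * (x / 2) ^ (2 * m))"

end

theory Submission
  imports Defs
begin

text \<open>Expand \<open>u(x\<^sub>0 + y) = \<Sum>\<^sub>m P\<^sub>m(y)\<close> into homogeneous polynomials and restrict
  each \<open>P\<^sub>m\<close> to the unit circle, \<open>f\<^sub>m(\<theta>) = P\<^sub>m(cos \<theta>, sin \<theta>)\<close>. Comparing degrees in
  \<open>\<Delta>u + \<lambda>u = 0\<close> and using the polar form of the Laplacian gives
  \<open>f\<^sub>m'' + m\<^sup>2 f\<^sub>m = -\<lambda> f\<^sub>m\<^sub>-\<^sub>2\<close>, while the two singular lines say that \<open>f\<^sub>m'\<close> vanishes at
  \<open>\<phi>\<close> and at \<open>\<phi> + 2\<pi>\<alpha>\<close>. As \<open>sin (2\<pi>m\<alpha>) \<noteq> 0\<close> for irrational \<open>\<alpha>\<close>, these two Neumann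
  conditions exclude the oscillating solutions \<open>cos (m\<theta>)\<close>, \<open>sin (m\<theta>)\<close>, so by induction every
  \<open>f\<^sub>m\<close> is the constant prescribed by \<open>f\<^sub>0 = u(x\<^sub>0)\<close>: zero for odd \<open>m\<close> and the Taylor
  coefficients of \<open>u(x\<^sub>0) J\<^sub>0(\<surd>\<lambda> r)\<close> for even \<open>m\<close>.\<close>

section \<open>Homogeneous polynomials and double power series\<close>

text \<open>\<open>hom_part (dx_coeffs c) m\<close> and \<open>hom_part (dy_coeffs c) m\<close> are the partial derivatives
  \<open>\<partial>\<^sub>1 P\<^sub>m\<^sub>+\<^sub>1\<close> and \<open>\<partial>\<^sub>2 P\<^sub>m\<^sub>+\<^sub>1\<close> of \<open>P\<^sub>m\<^sub>+\<^sub>1 = hom_part c (m + 1)\<close>.\<close>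

definition dx_coeffs :: "(nat \<Rightarrow> nat \<Rightarrow> real) \<Rightarrow> nat \<Rightarrow> nat \<Rightarrow> real" where
  "dx_coeffs c m j = real (Suc j) * c (Suc m) (Suc j)"

definition dy_coeffs :: "(nat \<Rightarrow> nat \<Rightarrow> real) \<Rightarrow> nat \<Rightarrow> nat \<Rightarrow> real" where
  "dy_coeffs c m j = real (Suc m - j) * c (Suc m) j"

definition coeff_abs_sum :: "(nat \<Rightarrow> nat \<Rightarrow> real) \<Rightarrow> nat \<Rightarrow> real" where
  "coeff_abs_sum c m = (\<Sum>j\<le>m. \<bar>c m j\<bar>)"

definition coeffs_abs_summable :: "(nat \<Rightarrow> nat \<Rightarrow> real) \<Rightarrow> real \<Rightarrow> bool" where
  "coeffs_abs_summable c s \<longleftrightarrow> summable (\<lambda>m. coeff_abs_sum c m * s ^ m)"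

definition double_series :: "(nat \<Rightarrow> nat \<Rightarrow> real) \<Rightarrow> real \<times> real \<Rightarrow> real" where
  "double_series c y = (\<Sum>m. hom_part c m y)"

lemma abs_fst_le_norm: "\<bar>fst (y::real \<times> real)\<bar> \<le> norm y"
  by (metis norm_fst_le prod.collapse real_norm_def)

lemma abs_snd_le_norm: "\<bar>snd (y::real \<times> real)\<bar> \<le> norm y"
  by (metis norm_snd_le prod.collapse real_norm_def)

lemma norm_polar_pair: "0 \<le> r \<Longrightarrow> norm (r * cos t, r * sin t) = (r::real)"
  by (simp add: norm_Pair power_mult_distrib flip: distrib_left)

lemma hom_part_scale: "hom_part c m (t * a, t * b) = t ^ m * hom_part c m (a, b)"
  unfolding hom_part_def sum_distrib_left
proof (rule sum.cong[OF refl])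
  fix j assume "j \<in> {..m}"
  then have "t ^ j * t ^ (m - j) = t ^ m" by (simp flip: power_add)
  then show "c m j * fst (t * a, t * b) ^ j * snd (t * a, t * b) ^ (m - j) =
        t ^ m * (c m j * fst (a, b) ^ j * snd (a, b) ^ (m - j))"
    by (simp add: algebra_simps)
qed

lemma hom_part_zero_point: "hom_part c m 0 = (if m = 0 then c 0 0 else 0)"
  by (auto simp: hom_part_def zero_prod_def power_0_left intro!: sum.neutral)

lemma abs_hom_part_le:
  assumes "\<bar>fst y\<bar> \<le> s" "\<bar>snd y\<bar> \<le> s"
  shows "\<bar>hom_part c m y\<bar> \<le> coeff_abs_sum c m * s ^ m"
proof -
  have "\<bar>hom_part c m y\<bar> \<le> (\<Sum>j\<le>m. \<bar>c m j * fst y ^ j * snd y ^ (m - j)\<bar>)"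
    unfolding hom_part_def by (rule sum_abs)
  also have "\<dots> \<le> (\<Sum>j\<le>m. \<bar>c m j\<bar> * s ^ m)"
  proof (rule sum_mono)
    fix j assume j: "j \<in> {..m}"
    have "\<bar>fst y ^ j\<bar> * \<bar>snd y ^ (m - j)\<bar> \<le> s ^ j * s ^ (m - j)"
      unfolding power_abs using assms by (intro mult_mono power_mono) auto
    also have "\<dots> = s ^ m" using j by (simp flip: power_add)
    finally show "\<bar>c m j * fst y ^ j * snd y ^ (m - j)\<bar> \<le> \<bar>c m j\<bar> * s ^ m"
      by (simp add: abs_mult mult.assoc mult_left_mono)
  qed
  also have "\<dots> = coeff_abs_sum c m * s ^ m" by (simp add: coeff_abs_sum_def sum_distrib_right)
  finally show ?thesis .
qed

lemma has_derivative_hom_part: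
  "(hom_part c (Suc m) has_derivative
     (\<lambda>h. hom_part (dx_coeffs c) m y * fst h + hom_part (dy_coeffs c) m y * snd h)) (at y)"
proof -
  have monomial: "((\<lambda>y. c (Suc m) j * fst y ^ j * snd y ^ (Suc m - j)) has_derivative
     (\<lambda>h. c (Suc m) j * (real j * fst y ^ (j - 1) * fst h) * snd y ^ (Suc m - j) +
          c (Suc m) j * fst y ^ j * (real (Suc m - j) * snd y ^ (Suc m - j - 1) * snd h))) (at y)" for j
    by (auto intro!: derivative_eq_intros simp: algebra_simps)
  have dx: "(\<Sum>j\<le>Suc m. c (Suc m) j * (real j * fst y ^ (j - 1) * a) * snd y ^ (Suc m - j))
      = hom_part (dx_coeffs c) m y * a" for a
    unfolding hom_part_def dx_coeffs_def sum.atMost_Suc_shift sum_distrib_right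
    by (auto intro!: sum.cong simp: algebra_simps)
  have dy: "(\<Sum>j\<le>Suc m. c (Suc m) j * fst y ^ j * (real (Suc m - j) * snd y ^ (Suc m - j - 1) * a))
      = hom_part (dy_coeffs c) m y * a" for a
    unfolding hom_part_def dy_coeffs_def sum.atMost_Suc sum_distrib_right
    by (auto intro!: sum.cong simp: algebra_simps Suc_diff_le)
  show ?thesis
    unfolding hom_part_def[of c "Suc m", abs_def]
    by (rule has_derivative_eq_rhs[OF has_derivative_sum[OF monomial]]) (rule ext, simp only: sum.distrib dx dy)
qed

lemma has_real_derivative_along_pair:
  assumes "(F has_derivative (\<lambda>h. A * fst h + B * snd h)) (at (p t, q t))"
    and "(p has_real_derivative d1) (at t)" and "(q has_real_derivative d2) (at t)"
  shows "((\<lambda>t. F (p t, q t)) has_real_derivative (A * d1 + B * d2)) (at t)"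
proof -
  have "((\<lambda>t. (p t, q t)) has_derivative (\<lambda>h. (d1 * h, d2 * h))) (at t)"
    using assms(2,3) unfolding has_field_derivative_def by (rule has_derivative_Pair)
  from has_derivative_compose[OF this assms(1)]
  show ?thesis unfolding has_field_derivative_def o_def
    by (rule has_derivative_eq_rhs) (auto simp: algebra_simps)
qed

lemma hom_part_euler:
  "hom_part (dx_coeffs c) m y * fst y + hom_part (dy_coeffs c) m y * snd y
     = real (Suc m) * hom_part c (Suc m) y"
proof (rule DERIV_unique)
  have "((\<lambda>t. hom_part c (Suc m) (t * fst y, t * snd y)) has_real_derivative
          (hom_part (dx_coeffs c) m (1 * fst y, 1 * snd y) * fst y
           + hom_part (dy_coeffs c) m (1 * fst y, 1 * snd y) * snd y)) (at 1)"
    by (rule has_real_derivative_along_pair[OF has_derivative_hom_part])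
       (auto intro!: derivative_eq_intros)
  then show "((\<lambda>t. hom_part c (Suc m) (t * fst y, t * snd y)) has_real_derivative
          (hom_part (dx_coeffs c) m y * fst y + hom_part (dy_coeffs c) m y * snd y)) (at 1)"
    by simp
  show "((\<lambda>t. hom_part c (Suc m) (t * fst y, t * snd y)) has_real_derivative
          (real (Suc m) * hom_part c (Suc m) y)) (at 1)"
    unfolding hom_part_scale by (auto intro!: derivative_eq_intros)
qed

lemma coeff_abs_sum_nonneg: "0 \<le> coeff_abs_sum c m"
  unfolding coeff_abs_sum_def by (auto intro: sum_nonneg)

lemma coeff_abs_sum_dx_le: "coeff_abs_sum (dx_coeffs c) m \<le> real (Suc m) * coeff_abs_sum c (Suc m)"
proof -
  have "coeff_abs_sum (dx_coeffs c) m = (\<Sum>j\<le>m. real (Suc j) * \<bar>c (Suc m) (Suc j)\<bar>)"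
    unfolding coeff_abs_sum_def dx_coeffs_def by (simp add: abs_mult)
  also have "\<dots> \<le> (\<Sum>j\<le>m. real (Suc m) * \<bar>c (Suc m) (Suc j)\<bar>)"
    by (rule sum_mono) (auto intro: mult_right_mono)
  also have "\<dots> \<le> real (Suc m) * coeff_abs_sum c (Suc m)"
    unfolding coeff_abs_sum_def sum.atMost_Suc_shift sum_distrib_left[symmetric]
    by (simp add: distrib_left)
  finally show ?thesis .
qed

lemma coeff_abs_sum_dy_le: "coeff_abs_sum (dy_coeffs c) m \<le> real (Suc m) * coeff_abs_sum c (Suc m)"
proof -
  have "coeff_abs_sum (dy_coeffs c) m = (\<Sum>j\<le>m. real (Suc m - j) * \<bar>c (Suc m) j\<bar>)"
    unfolding coeff_abs_sum_def dy_coeffs_def by (simp add: abs_mult)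
  also have "\<dots> \<le> (\<Sum>j\<le>m. real (Suc m) * \<bar>c (Suc m) j\<bar>)"
    by (rule sum_mono) (auto intro: mult_right_mono)
  also have "\<dots> \<le> real (Suc m) * coeff_abs_sum c (Suc m)"
    unfolding coeff_abs_sum_def sum.atMost_Suc sum_distrib_left[symmetric]
    by (simp add: distrib_left)
  finally show ?thesis .
qed

lemma summable_coeff_abs_sum_diffs:
  assumes "coeffs_abs_summable c s" "0 \<le> t" "t < s"
  shows "summable (\<lambda>m. real (Suc m) * coeff_abs_sum c (Suc m) * t ^ m)"
proof -
  have "summable (\<lambda>m. diffs (coeff_abs_sum c) m * t ^ m)"
  proof (rule termdiff_converges[of t s])
    show "norm t < s" using assms by simp
    fix x :: real assume "norm x < s"
    then have "summable (\<lambda>m. norm (coeff_abs_sum c m * x ^ m))"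
      using assms(1) by (intro powser_insidea[of _ s]) (auto simp: coeffs_abs_summable_def)
    then show "summable (\<lambda>m. coeff_abs_sum c m * x ^ m)" by (rule summable_norm_cancel)
  qed
  then show ?thesis by (simp add: diffs_def)
qed

lemma coeffs_abs_summable_dx:
  assumes "coeffs_abs_summable c s" "0 \<le> t" "t < s"
  shows "coeffs_abs_summable (dx_coeffs c) t"
  unfolding coeffs_abs_summable_def
  by (rule summable_comparison_test[OF _ summable_coeff_abs_sum_diffs[OF assms]])
     (auto intro!: exI[of _ 0] mult_right_mono coeff_abs_sum_dx_le[simplified] simp: coeff_abs_sum_nonneg assms)

lemma coeffs_abs_summable_dy:
  assumes "coeffs_abs_summable c s" "0 \<le> t" "t < s"
  shows "coeffs_abs_summable (dy_coeffs c) t"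
  unfolding coeffs_abs_summable_def
  by (rule summable_comparison_test[OF _ summable_coeff_abs_sum_diffs[OF assms]])
     (auto intro!: exI[of _ 0] mult_right_mono coeff_abs_sum_dy_le[simplified] simp: coeff_abs_sum_nonneg assms)

lemma sums_double_series:
  assumes "coeffs_abs_summable c s" "\<bar>fst y\<bar> \<le> s" "\<bar>snd y\<bar> \<le> s"
  shows "(\<lambda>m. hom_part c m y) sums double_series c y"
proof -
  have "summable (\<lambda>m. hom_part c m y)"
    by (rule summable_comparison_test[OF _ assms(1)[unfolded coeffs_abs_summable_def]])
       (use abs_hom_part_le[OF assms(2,3)] in auto)
  then show ?thesis unfolding double_series_def by (rule summable_sums)
qed

lemma uniform_limit_double_series:
  assumes "coeffs_abs_summable c r"
  shows "uniform_limit (ball 0 r) (\<lambda>n y. \<Sum>m<n. hom_part c m y) (double_series c) sequentially"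
  unfolding double_series_def
proof (rule Weierstrass_m_test)
  fix m y assume "y \<in> ball (0 :: real \<times> real) r"
  then have "\<bar>fst y\<bar> \<le> r" "\<bar>snd y\<bar> \<le> r"
    using abs_fst_le_norm[of y] abs_snd_le_norm[of y] by auto
  then show "norm (hom_part c m y) \<le> coeff_abs_sum c m * r ^ m"
    using abs_hom_part_le by simp
qed (use assms in \<open>simp add: coeffs_abs_summable_def\<close>)

lemma uniform_limit_gradient_pair:
  fixes A B :: "nat \<Rightarrow> real \<times> real \<Rightarrow> real"
  assumes "uniform_limit S A a sequentially" "uniform_limit S B b sequentially" "e > 0"
  shows "\<forall>\<^sub>F n in sequentially. \<forall>x\<in>S. \<forall>h.
           norm ((A n x * fst h + B n x * snd h) - (a x * fst h + b x * snd h)) \<le> e * norm h"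
proof -
  have "\<forall>\<^sub>F n in sequentially. \<forall>x\<in>S. dist (A n x) (a x) < e / 2"
       "\<forall>\<^sub>F n in sequentially. \<forall>x\<in>S. dist (B n x) (b x) < e / 2"
    using assms unfolding uniform_limit_iff by (meson half_gt_zero)+
  then show ?thesis
  proof eventually_elim
    case (elim n)
    show ?case
    proof (intro ballI allI)
      fix x h assume "x \<in> S"
      with elim have "\<bar>A n x - a x\<bar> \<le> e / 2" "\<bar>B n x - b x\<bar> \<le> e / 2"
        by (auto simp: dist_real_def)
      then have "\<bar>A n x - a x\<bar> * \<bar>fst h\<bar> + \<bar>B n x - b x\<bar> * \<bar>snd h\<bar> \<le> e / 2 * norm h + e / 2 * norm h"
        using assms(3) by (intro add_mono mult_mono abs_fst_le_norm abs_snd_le_norm) auto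
      moreover have "\<bar>(A n x * fst h + B n x * snd h) - (a x * fst h + b x * snd h)\<bar>
          \<le> \<bar>A n x - a x\<bar> * \<bar>fst h\<bar> + \<bar>B n x - b x\<bar> * \<bar>snd h\<bar>"
        by (simp add: algebra_simps flip: abs_mult)
      ultimately show "norm ((A n x * fst h + B n x * snd h) - (a x * fst h + b x * snd h)) \<le> e * norm h"
        by simp
    qed
  qed
qed

lemma has_derivative_double_series:
  assumes "coeffs_abs_summable c s" "norm y < s"
  shows "(double_series c has_derivative
           (\<lambda>h. double_series (dx_coeffs c) y * fst h + double_series (dy_coeffs c) y * snd h)) (at y)"
proof -
  define r where "r = (norm y + s) / 2"
  define S where "S = ball (0 :: real \<times> real) r"
  have r: "norm y < r" "r < s" "0 \<le> r" using assms(2) by (simp_all add: r_def) (smt (verit) norm_ge_zero)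
  then have y: "y \<in> S" by (simp add: S_def)
  have summable_dx: "coeffs_abs_summable (dx_coeffs c) r"
    and summable_dy: "coeffs_abs_summable (dy_coeffs c) r"
    using coeffs_abs_summable_dx coeffs_abs_summable_dy assms(1) r by auto
  have in_square: "\<bar>fst x\<bar> \<le> s" "\<bar>snd x\<bar> \<le> s" if "x \<in> S" for x
    using that r abs_fst_le_norm[of x] abs_snd_le_norm[of x] by (auto simp: S_def)
  \<comment> \<open>Without its constant term, the series is differentiated termwise by \<open>has_derivative_hom_part\<close>.\<close>
  have "\<exists>g. \<forall>x\<in>S. (\<lambda>m. hom_part c (Suc m) x) sums g x \<and>
     (g has_derivative (\<lambda>h. double_series (dx_coeffs c) x * fst h + double_series (dy_coeffs c) x * snd h))
       (at x within S)"
  proof (rule has_derivative_series)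
    show "convex S" by (simp add: S_def)
    show "(hom_part c (Suc m) has_derivative
        (\<lambda>h. hom_part (dx_coeffs c) m x * fst h + hom_part (dy_coeffs c) m x * snd h)) (at x within S)"
      for m x
      by (rule has_derivative_at_withinI[OF has_derivative_hom_part])
    show "(\<lambda>m. hom_part c (Suc m) y) sums (double_series c y - hom_part c 0 y)"
      using sums_double_series[OF assms(1) in_square[OF y]]
      by (simp add: sums_Suc_iff[of "\<lambda>m. hom_part c m y"])
    show "\<forall>\<^sub>F n in sequentially. \<forall>x\<in>S. \<forall>h.
        norm ((\<Sum>m<n. hom_part (dx_coeffs c) m x * fst h + hom_part (dy_coeffs c) m x * snd h)
          - (double_series (dx_coeffs c) x * fst h + double_series (dy_coeffs c) x * snd h)) \<le> e * norm h"
      if "e > 0" for e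
      using uniform_limit_gradient_pair[OF uniform_limit_double_series[OF summable_dx]
          uniform_limit_double_series[OF summable_dy] that]
      by (simp add: S_def sum.distrib sum_distrib_right)
  qed (rule y)
  then obtain g where g_sums: "\<And>x. x \<in> S \<Longrightarrow> (\<lambda>m. hom_part c (Suc m) x) sums g x"
    and g_deriv: "(g has_derivative
        (\<lambda>h. double_series (dx_coeffs c) y * fst h + double_series (dy_coeffs c) y * snd h)) (at y within S)"
    using y by blast
  have g_at: "(g has_derivative
      (\<lambda>h. double_series (dx_coeffs c) y * fst h + double_series (dy_coeffs c) y * snd h)) (at y)"
    using g_deriv at_within_open[OF y] by (simp add: S_def)
  have "g x + c 0 0 = double_series c x" if "x \<in> S" for x
    using sums_Suc[OF g_sums[OF that]] by (simp add: double_series_def sums_iff hom_part_def)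
  then show ?thesis
    by (intro has_derivative_transform_within_open[OF has_derivative_add_const[OF g_at, of "c 0 0"] _ y])
       (simp_all add: S_def)
qed

lemma has_derivative_double_series_on_ball:
  assumes "coeffs_abs_summable d s" "\<rho> \<le> s" "norm y < \<rho>"
    and "\<And>z. norm z < \<rho> \<Longrightarrow> F z = double_series d z"
  shows "(F has_derivative
           (\<lambda>h. double_series (dx_coeffs d) y * fst h + double_series (dy_coeffs d) y * snd h)) (at y)"
proof (rule has_derivative_transform_within_open[OF _ open_ball[of 0 \<rho>]])
  show "(double_series d has_derivative
      (\<lambda>h. double_series (dx_coeffs d) y * fst h + double_series (dy_coeffs d) y * snd h)) (at y)"
    using assms by (intro has_derivative_double_series[of d s]) auto
qed (use assms in auto)

lemma partial_derivatives_of_has_derivative: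
  assumes "((\<lambda>z. G (x0 + z)) has_derivative (\<lambda>h. A * fst h + B * snd h)) (at y)"
  shows "partial1 G (x0 + y) = A" "partial2 G (x0 + y) = B"
    "dir_deriv G (x0 + y) v = A * fst v + B * snd v"
proof -
  have "((\<lambda>t. G (x0 + (t - fst x0, snd y))) has_real_derivative (A * 1 + B * 0)) (at (fst x0 + fst y))"
    by (rule has_real_derivative_along_pair[where F = "\<lambda>z. G (x0 + z)"])
       (use assms in \<open>auto intro!: derivative_eq_intros\<close>)
  moreover have "(\<lambda>t. G (x0 + (t - fst x0, snd y))) = (\<lambda>t. G (t, snd (x0 + y)))"
    by (rule ext, rule arg_cong[of _ _ G]) (simp add: prod_eq_iff)
  ultimately show "partial1 G (x0 + y) = A" unfolding partial1_def by (simp add: DERIV_imp_deriv)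
  have "((\<lambda>t. G (x0 + (fst y, t - snd x0))) has_real_derivative (A * 0 + B * 1)) (at (snd x0 + snd y))"
    by (rule has_real_derivative_along_pair[where F = "\<lambda>z. G (x0 + z)"])
       (use assms in \<open>auto intro!: derivative_eq_intros\<close>)
  moreover have "(\<lambda>t. G (x0 + (fst y, t - snd x0))) = (\<lambda>t. G (fst (x0 + y), t))"
    by (rule ext, rule arg_cong[of _ _ G]) (simp add: prod_eq_iff)
  ultimately show "partial2 G (x0 + y) = B" unfolding partial2_def by (simp add: DERIV_imp_deriv)
  have "((\<lambda>t. G (x0 + (fst y + t * fst v, snd y + t * snd v))) has_real_derivative
      (A * fst v + B * snd v)) (at 0)"
    by (rule has_real_derivative_along_pair[where F = "\<lambda>z. G (x0 + z)"])
       (use assms in \<open>auto intro!: derivative_eq_intros\<close>)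
  moreover have "(\<lambda>t. G (x0 + (fst y + t * fst v, snd y + t * snd v))) = (\<lambda>t. G (x0 + y + t *\<^sub>R v))"
    by (rule ext, rule arg_cong[of _ _ G]) (simp add: prod_eq_iff)
  ultimately show "dir_deriv G (x0 + y) v = A * fst v + B * snd v"
    unfolding dir_deriv_def by (simp add: DERIV_imp_deriv)
qed

lemma powser_sums_zero_imp_coeffs_zero:
  fixes b :: "nat \<Rightarrow> real"
  assumes "\<epsilon> > 0" "\<And>s. 0 < s \<Longrightarrow> s < \<epsilon> \<Longrightarrow> (\<lambda>n. b n * s ^ n) sums 0"
  shows "b n = 0"
proof (induction n rule: less_induct)
  case (less n)
  define g where "g s = (\<Sum>k. b (k + n) * s ^ k)" for s
  have tail: "(\<lambda>k. b (k + n) * s ^ k) sums 0" if s: "0 < s" "s < \<epsilon>" for s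
  proof -
    have "(\<lambda>k. b (k + n) * s ^ (k + n)) sums 0"
      using sums_iff_shift[of "\<lambda>i. b i * s ^ i" n 0] assms(2)[OF s] less by simp
    then have "(\<lambda>k. b (k + n) * s ^ (k + n) / s ^ n) sums (0 / s ^ n)" by (rule sums_divide)
    then show ?thesis using s by (simp add: power_add)
  qed
  have "isCont g 0" unfolding g_def
    by (rule isCont_powser[of _ "\<epsilon> / 2"]) (use tail[of "\<epsilon> / 2"] assms(1) in \<open>auto simp: sums_iff\<close>)
  then have "(g \<longlongrightarrow> g 0) (at_right 0)"
    unfolding isCont_def by (rule tendsto_mono[OF at_le, rotated]) auto
  moreover have "(g \<longlongrightarrow> 0) (at_right 0)"
  proof (rule tendsto_eventually)
    show "\<forall>\<^sub>F s in at_right 0. g s = 0"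
      unfolding eventually_at_right[OF assms(1)] using tail
      by (intro exI[of _ \<epsilon>]) (auto simp: assms(1) g_def sums_iff)
  qed
  ultimately have "g 0 = 0" using tendsto_unique trivial_limit_at_right_real by blast
  then show ?case unfolding g_def using powser_zero[of "\<lambda>k. b (k + n)"] by simp
qed

section \<open>Angular restrictions of homogeneous polynomials\<close>

definition angular_deriv :: "(nat \<Rightarrow> nat \<Rightarrow> real) \<Rightarrow> nat \<Rightarrow> real \<Rightarrow> real" where
  "angular_deriv c m \<theta> = hom_part (dx_coeffs c) m (cos \<theta>, sin \<theta>) * (- sin \<theta>)
     + hom_part (dy_coeffs c) m (cos \<theta>, sin \<theta>) * cos \<theta>"

definition angular_deriv2 :: "(nat \<Rightarrow> nat \<Rightarrow> real) \<Rightarrow> nat \<Rightarrow> real \<Rightarrow> real" where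
  "angular_deriv2 c j \<theta> =
     hom_part (dx_coeffs (dx_coeffs c)) j (cos \<theta>, sin \<theta>) * (sin \<theta>)\<^sup>2
     - 2 * hom_part (dy_coeffs (dx_coeffs c)) j (cos \<theta>, sin \<theta>) * sin \<theta> * cos \<theta>
     + hom_part (dy_coeffs (dy_coeffs c)) j (cos \<theta>, sin \<theta>) * (cos \<theta>)\<^sup>2
     - hom_part (dx_coeffs c) (Suc j) (cos \<theta>, sin \<theta>) * cos \<theta>
     - hom_part (dy_coeffs c) (Suc j) (cos \<theta>, sin \<theta>) * sin \<theta>"

lemma dx_dy_coeffs_commute: "dx_coeffs (dy_coeffs c) = dy_coeffs (dx_coeffs c)"
  by (intro ext) (simp add: dx_coeffs_def dy_coeffs_def)

lemma has_real_derivative_hom_part_circle: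
  "((\<lambda>\<theta>. hom_part c (Suc m) (cos \<theta>, sin \<theta>)) has_real_derivative angular_deriv c m \<theta>) (at \<theta>)"
  unfolding angular_deriv_def
  by (rule has_real_derivative_along_pair[OF has_derivative_hom_part]) (auto intro!: derivative_eq_intros)

lemma has_real_derivative_angular_deriv_0:
  "(angular_deriv c 0 has_real_derivative - hom_part c 1 (cos \<theta>, sin \<theta>)) (at \<theta>)"
proof -
  have "angular_deriv c 0 = (\<lambda>\<theta>. - c 1 1 * sin \<theta> + c 1 0 * cos \<theta>)"
    by (simp add: fun_eq_iff angular_deriv_def hom_part_def dx_coeffs_def dy_coeffs_def)
  then show ?thesis
    by (auto intro!: derivative_eq_intros simp: hom_part_def)
qed

lemma has_real_derivative_angular_deriv:
  "(angular_deriv c (Suc j) has_real_derivative angular_deriv2 c j \<theta>) (at \<theta>)"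
proof -
  note dx = has_real_derivative_hom_part_circle[of "dx_coeffs c" j \<theta>]
    and dy = has_real_derivative_hom_part_circle[of "dy_coeffs c" j \<theta>]
  have "(angular_deriv c (Suc j) has_real_derivative
     angular_deriv (dx_coeffs c) j \<theta> * (- sin \<theta>) + hom_part (dx_coeffs c) (Suc j) (cos \<theta>, sin \<theta>) * (- cos \<theta>)
      + (angular_deriv (dy_coeffs c) j \<theta> * cos \<theta> + hom_part (dy_coeffs c) (Suc j) (cos \<theta>, sin \<theta>) * (- sin \<theta>)))
     (at \<theta>)"
    unfolding angular_deriv_def[of c "Suc j", abs_def]
    by (intro DERIV_add DERIV_cong[OF DERIV_mult[OF dx DERIV_minus[OF DERIV_sin]]]
        DERIV_cong[OF DERIV_mult[OF dy DERIV_cos]]) (simp_all add: algebra_simps)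
  then show ?thesis
    by (rule DERIV_cong)
       (simp add: angular_deriv_def angular_deriv2_def dx_dy_coeffs_commute power2_eq_square algebra_simps)
qed

text \<open>The polar form of the Laplacian on the unit circle, with Euler's identity
  \<open>hom_part_euler\<close> supplying the radial derivatives.\<close>

lemma angular_deriv2_laplacian:
  "angular_deriv2 c j \<theta> + (real (Suc (Suc j)))\<^sup>2 * hom_part c (Suc (Suc j)) (cos \<theta>, sin \<theta>)
     = hom_part (dx_coeffs (dx_coeffs c)) j (cos \<theta>, sin \<theta>)
       + hom_part (dy_coeffs (dy_coeffs c)) j (cos \<theta>, sin \<theta>)"
proof -
  define e where "e = (cos \<theta>, sin \<theta>)"
  define P11 P12 P22 P1 P2 P where "P11 = hom_part (dx_coeffs (dx_coeffs c)) j e"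
    and "P12 = hom_part (dy_coeffs (dx_coeffs c)) j e"
    and "P22 = hom_part (dy_coeffs (dy_coeffs c)) j e"
    and "P1 = hom_part (dx_coeffs c) (Suc j) e" and "P2 = hom_part (dy_coeffs c) (Suc j) e"
    and "P = hom_part c (Suc (Suc j)) e"
  have "P1 * cos \<theta> + P2 * sin \<theta> = (real j + 2) * P"
    using hom_part_euler[of c "Suc j" e] by (simp add: P1_def P2_def P_def e_def)
  moreover have "P11 * cos \<theta> + P12 * sin \<theta> = (real j + 1) * P1"
    using hom_part_euler[of "dx_coeffs c" j e] by (simp add: P11_def P12_def P1_def e_def)
  moreover have "P12 * cos \<theta> + P22 * sin \<theta> = (real j + 1) * P2"
    using hom_part_euler[of "dy_coeffs c" j e]
    by (simp add: P22_def P12_def P2_def e_def dx_dy_coeffs_commute)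
  moreover have "(sin \<theta>)\<^sup>2 + (cos \<theta>)\<^sup>2 = 1" by simp
  ultimately have "P11 * (sin \<theta>)\<^sup>2 - 2 * P12 * sin \<theta> * cos \<theta> + P22 * (cos \<theta>)\<^sup>2 - P1 * cos \<theta>
      - P2 * sin \<theta> + (real j + 2)\<^sup>2 * P = P11 + P22"
    by algebra
  then show ?thesis
    by (simp add: angular_deriv2_def P11_def P12_def P22_def P1_def P2_def P_def e_def add.commute)
qed

text \<open>The solution of \<open>f'' + n\<^sup>2 f = K\<close> is \<open>K/n\<^sup>2 + a cos (n(x-\<phi>)) + b sin (n(x-\<phi>))\<close>;
  \<open>f'(\<phi>) = 0\<close> kills \<open>b\<close>, and \<open>f'(\<psi>) = 0\<close> then kills \<open>a\<close> unless \<open>sin (n(\<psi>-\<phi>)) = 0\<close>.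
  Uniqueness is shown with the energy \<open>h'\<^sup>2 + n\<^sup>2 h\<^sup>2\<close> of the difference \<open>h\<close>.\<close>

lemma forced_oscillator_constant:
  fixes f f' f'' :: "real \<Rightarrow> real" and n K \<phi> \<psi> :: real
  assumes n: "n > 0" and df: "\<And>x. (f has_real_derivative f' x) (at x)"
    and ddf: "\<And>x. (f' has_real_derivative f'' x) (at x)"
    and ode: "\<And>x. f'' x + n\<^sup>2 * f x = K" and "f' \<phi> = 0" and "f' \<psi> = 0"
    and "sin (n * (\<psi> - \<phi>)) \<noteq> 0"
  shows "f x = K / n\<^sup>2"
proof -
  define a where "a = f \<phi> - K / n\<^sup>2"
  define h where "h x = f x - K / n\<^sup>2 - a * cos (n * (x - \<phi>))" for x
  define h' where "h' x = f' x + a * n * sin (n * (x - \<phi>))" for x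
  define h'' where "h'' x = f'' x + a * n\<^sup>2 * cos (n * (x - \<phi>))" for x
  have dh: "(h has_real_derivative h' x) (at x)" for x
    unfolding h_def[abs_def] h'_def
    by (rule DERIV_cong, (rule derivative_intros df)+)
       (auto intro!: derivative_eq_intros simp: algebra_simps)
  have dh': "(h' has_real_derivative h'' x) (at x)" for x
    unfolding h'_def[abs_def] h''_def
    by (rule DERIV_cong, (rule derivative_intros ddf)+)
       (auto intro!: derivative_eq_intros simp: algebra_simps power2_eq_square)
  have h'': "h'' x = - n\<^sup>2 * h x" for x
  proof -
    have ode_x: "f'' x = K - n\<^sup>2 * f x" using ode[of x] by simp
    show ?thesis unfolding h''_def h_def ode_x using n by (simp add: field_simps)
  qed
  define E where "E x = (h' x)\<^sup>2 + n\<^sup>2 * (h x)\<^sup>2" for x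
  have "(E has_real_derivative 0) (at x)" for x
  proof -
    have "(E has_real_derivative (2 * h' x * h'' x + n\<^sup>2 * (2 * h x * h' x))) (at x)"
      unfolding E_def[abs_def] by (rule DERIV_cong, (rule derivative_intros dh dh')+) (simp add: algebra_simps)
    then show ?thesis by (simp add: h'' algebra_simps)
  qed
  moreover have "E \<phi> = 0" using assms by (simp add: E_def h'_def h_def a_def)
  ultimately have "E x = 0" for x using DERIV_isconst_all[of E x \<phi>] by auto
  then have "(h' x)\<^sup>2 = 0" "n\<^sup>2 * (h x)\<^sup>2 = 0" for x
    unfolding E_def by (smt (verit) zero_le_power2 mult_nonneg_nonneg)+
  then have h0: "h x = 0" "h' x = 0" for x using n by simp_all
  have "a * n * sin (n * (\<psi> - \<phi>)) = 0" using h0(2)[of \<psi>] assms by (simp add: h'_def)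
  then have "a = 0" using assms by simp
  then show ?thesis using h0(1)[of x] by (simp add: h_def)
qed

lemma hom_part_circle_constant:
  assumes "\<And>\<theta>. (angular_deriv c m has_real_derivative F \<theta>) (at \<theta>)"
    and "\<And>\<theta>. F \<theta> + (real (Suc m))\<^sup>2 * hom_part c (Suc m) (cos \<theta>, sin \<theta>) = K"
    and "angular_deriv c m \<phi> = 0" and "angular_deriv c m \<psi> = 0"
    and "sin (real (Suc m) * (\<psi> - \<phi>)) \<noteq> 0"
  shows "hom_part c (Suc m) (cos \<theta>, sin \<theta>) = K / (real (Suc m))\<^sup>2"
  by (rule forced_oscillator_constant[OF _ has_real_derivative_hom_part_circle assms]) simp

lemma sin_irrational_turns_neq_0:
  assumes "\<alpha> \<notin> \<rat>" "n > 0"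
  shows "sin (real n * (\<alpha> * 2 * pi)) \<noteq> 0"
proof
  assume "sin (real n * (\<alpha> * 2 * pi)) = 0"
  then obtain i :: int where "real n * (\<alpha> * 2 * pi) = of_int i * pi"
    by (auto simp: sin_zero_iff_int2)
  then have "\<alpha> = of_int i / (2 * real n)" using assms(2) by (simp add: field_simps)
  with assms(1) show False by simp
qed

section \<open>The expansion at the crossing point\<close>

definition bessel_coeff :: "real \<Rightarrow> real \<Rightarrow> nat \<Rightarrow> real" where
  "bessel_coeff a lam n = (if even n then a * (- lam / 4) ^ (n div 2) / (fact (n div 2))\<^sup>2 else 0)"

lemma bessel_coeff_Suc_Suc:
  "bessel_coeff a lam (Suc (Suc j)) = - lam * bessel_coeff a lam j / (real (Suc (Suc j)))\<^sup>2"
proof (cases "even j")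
  case True
  then obtain k where k: "j = 2 * k" by blast
  then have "Suc (Suc j) div 2 = Suc k" "j div 2 = k" "real (Suc (Suc j)) = 2 * (real k + 1)" by auto
  then show ?thesis using k by (simp add: bessel_coeff_def field_simps power2_eq_square)
qed (simp add: bessel_coeff_def)

lemma bessel_coeff_series:
  assumes "(\<lambda>n. bessel_coeff a lam n * r ^ n) sums v" "a \<noteq> 0" "0 \<le> lam"
  shows "v = a * bessel_J0 (sqrt lam * r)"
proof -
  have "(\<lambda>k. bessel_coeff a lam (2 * k) * r ^ (2 * k)) sums v"
  proof (subst sums_mono_reindex[of "\<lambda>k. 2 * k"])
    show "strict_mono (\<lambda>k::nat. 2 * k)" by (rule strict_monoI) simp
    show "bessel_coeff a lam n * r ^ n = 0" if "n \<notin> range (\<lambda>k::nat. 2 * k)" for n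
      using that by (auto simp: bessel_coeff_def elim!: evenE)
  qed (rule assms(1))
  moreover have "bessel_coeff a lam (2 * k) * r ^ (2 * k)
      = a * ((-1) ^ k / (fact k)\<^sup>2 * (sqrt lam * r / 2) ^ (2 * k))" for k
  proof -
    have "(- lam / 4) ^ k * r ^ (2 * k) = (-1) ^ k * (lam * r\<^sup>2 / 4) ^ k"
      by (simp add: power_mult power_mult_distrib flip: power_minus1_even power_mult_distrib)
    moreover have "(sqrt lam * r / 2) ^ (2 * k) = (lam * r\<^sup>2 / 4) ^ k"
      using assms(3) by (simp add: power_mult power_mult_distrib power_divide)
    ultimately show ?thesis by (simp add: bessel_coeff_def)
  qed
  ultimately have "(\<lambda>k. a * ((-1) ^ k / (fact k)\<^sup>2 * (sqrt lam * r / 2) ^ (2 * k))) sums (a * (v / a))"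
    using assms(2) by simp
  then have "(\<lambda>k. (-1) ^ k / (fact k)\<^sup>2 * (sqrt lam * r / 2) ^ (2 * k)) sums (v / a)"
    using sums_mult_iff assms(2) by blast
  then show ?thesis using assms(2) unfolding bessel_J0_def by (simp add: sums_iff)
qed

lemma singular_ray_normal:
  assumes "singular_line \<Omega> u \<Gamma>" "\<Gamma> = closed_segment x0 (x0 + r *\<^sub>R (cos \<phi>, sin \<phi>))" "r > 0"
  obtains \<sigma> :: real where "\<sigma> = 1 \<or> \<sigma> = -1" "\<And>x. x \<in> \<Gamma> \<Longrightarrow> dir_deriv u x (\<sigma> *\<^sub>R (- sin \<phi>, cos \<phi>)) = 0"
proof -
  obtain a b where "\<Gamma> = closed_segment a b"
    and normal: "\<forall>x\<in>\<Gamma>. dir_deriv u x ((1 / norm (b - a)) *\<^sub>R (- snd (b - a), fst (b - a))) = 0"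
    using assms(1) unfolding singular_line_def Let_def by blast
  then have "{a, b} = {x0, x0 + r *\<^sub>R (cos \<phi>, sin \<phi>)}" using assms(2) by simp
  then have "(a, b) = (x0, x0 + r *\<^sub>R (cos \<phi>, sin \<phi>)) \<or> (b, a) = (x0, x0 + r *\<^sub>R (cos \<phi>, sin \<phi>))"
    by (auto simp: doubleton_eq_iff)
  then show thesis
  proof (elim disjE)
    assume "(a, b) = (x0, x0 + r *\<^sub>R (cos \<phi>, sin \<phi>))"
    then show thesis using that[of 1] normal assms(3) by (auto simp: norm_polar_pair)
  next
    assume "(b, a) = (x0, x0 + r *\<^sub>R (cos \<phi>, sin \<phi>))"
    moreover have "norm (- (r * cos \<phi>), - (r * sin \<phi>)) = r"
      using norm_polar_pair[of r \<phi>] assms(3) by (simp add: norm_Pair)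
    ultimately show thesis using that[of "-1"] normal assms(3) by auto
  qed
qed

text \<open>The local picture at \<open>x\<^sub>0\<close>; the coefficients converge on the square of half-side
  \<open>2\<rho>\<close>, which leaves room to differentiate twice on the ball of radius \<open>\<rho>\<close>.\<close>

locale helmholtz_expansion =
  fixes u :: "real \<times> real \<Rightarrow> real" and lam :: real and x0 :: "real \<times> real"
    and c :: "nat \<Rightarrow> nat \<Rightarrow> real" and \<rho> :: real
  assumes radius_pos: "0 < \<rho>"
    and coeffs_summable: "coeffs_abs_summable c (2 * \<rho>)"
    and expansion: "\<And>y. norm y < \<rho> \<Longrightarrow> u (x0 + y) = double_series c y"
    and helmholtz: "\<And>y. norm y < \<rho> \<Longrightarrow> laplacian u (x0 + y) + lam * u (x0 + y) = 0"
begin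

lemma summable_dx: "coeffs_abs_summable (dx_coeffs c) (3 / 2 * \<rho>)"
  and summable_dy: "coeffs_abs_summable (dy_coeffs c) (3 / 2 * \<rho>)"
  using coeffs_abs_summable_dx coeffs_abs_summable_dy coeffs_summable radius_pos by auto

lemma summable_dxdx: "coeffs_abs_summable (dx_coeffs (dx_coeffs c)) \<rho>"
  and summable_dydy: "coeffs_abs_summable (dy_coeffs (dy_coeffs c)) \<rho>"
  using coeffs_abs_summable_dx[OF summable_dx] coeffs_abs_summable_dy[OF summable_dy] radius_pos
  by auto

lemma sums_on_ball:
  assumes "norm y < \<rho>"
  shows "(\<lambda>m. hom_part c m y) sums double_series c y"
    and "(\<lambda>m. hom_part (dx_coeffs c) m y) sums double_series (dx_coeffs c) y"
    and "(\<lambda>m. hom_part (dy_coeffs c) m y) sums double_series (dy_coeffs c) y"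
    and "(\<lambda>m. hom_part (dx_coeffs (dx_coeffs c)) m y) sums double_series (dx_coeffs (dx_coeffs c)) y"
    and "(\<lambda>m. hom_part (dy_coeffs (dy_coeffs c)) m y) sums double_series (dy_coeffs (dy_coeffs c)) y"
proof -
  have "\<bar>fst y\<bar> \<le> \<rho>" "\<bar>snd y\<bar> \<le> \<rho>"
    using assms abs_fst_le_norm[of y] abs_snd_le_norm[of y] by auto
  then show "(\<lambda>m. hom_part c m y) sums double_series c y"
    and "(\<lambda>m. hom_part (dx_coeffs c) m y) sums double_series (dx_coeffs c) y"
    and "(\<lambda>m. hom_part (dy_coeffs c) m y) sums double_series (dy_coeffs c) y"
    and "(\<lambda>m. hom_part (dx_coeffs (dx_coeffs c)) m y) sums double_series (dx_coeffs (dx_coeffs c)) y"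
    and "(\<lambda>m. hom_part (dy_coeffs (dy_coeffs c)) m y) sums double_series (dy_coeffs (dy_coeffs c)) y"
    using radius_pos
    by (auto intro: sums_double_series[OF coeffs_summable] sums_double_series[OF summable_dx]
        sums_double_series[OF summable_dy] sums_double_series[OF summable_dxdx]
        sums_double_series[OF summable_dydy])
qed

lemma has_derivative_shifted:
  assumes "norm y < \<rho>"
  shows "((\<lambda>z. u (x0 + z)) has_derivative
    (\<lambda>h. double_series (dx_coeffs c) y * fst h + double_series (dy_coeffs c) y * snd h)) (at y)"
  using radius_pos assms
  by (intro has_derivative_double_series_on_ball[OF coeffs_summable _ assms expansion]) auto

lemma dir_deriv_eq:
  "norm y < \<rho> \<Longrightarrow>
     dir_deriv u (x0 + y) v = double_series (dx_coeffs c) y * fst v + double_series (dy_coeffs c) y * snd v"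
  by (rule partial_derivatives_of_has_derivative(3)[OF has_derivative_shifted])

lemma laplacian_eq:
  assumes "norm y < \<rho>"
  shows "laplacian u (x0 + y) =
           double_series (dx_coeffs (dx_coeffs c)) y + double_series (dy_coeffs (dy_coeffs c)) y"
proof -
  have "partial1 u (x0 + z) = double_series (dx_coeffs c) z"
    and "partial2 u (x0 + z) = double_series (dy_coeffs c) z" if "norm z < \<rho>" for z
    using partial_derivatives_of_has_derivative[OF has_derivative_shifted[OF that]] by auto
  then have "((\<lambda>z. partial1 u (x0 + z)) has_derivative
      (\<lambda>h. double_series (dx_coeffs (dx_coeffs c)) y * fst h + double_series (dy_coeffs (dx_coeffs c)) y * snd h))
        (at y)"
    and "((\<lambda>z. partial2 u (x0 + z)) has_derivative
      (\<lambda>h. double_series (dx_coeffs (dy_coeffs c)) y * fst h + double_series (dy_coeffs (dy_coeffs c)) y * snd h))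
        (at y)"
    using radius_pos assms
    by (auto intro!: has_derivative_double_series_on_ball[OF summable_dx, where \<rho> = \<rho>]
        has_derivative_double_series_on_ball[OF summable_dy, where \<rho> = \<rho>])
  then show ?thesis
    unfolding laplacian_def
    using partial_derivatives_of_has_derivative(1,2) by metis
qed

lemma hom_part_0: "hom_part c 0 y = u x0"
proof -
  have "(\<lambda>m. hom_part c m 0) sums c 0 0"
    unfolding hom_part_zero_point by (rule sums_single)
  then have "u x0 = c 0 0"
    using expansion[of 0] sums_on_ball(1)[of 0] radius_pos by (simp add: sums_unique2)
  then show ?thesis by (simp add: hom_part_def)
qed

lemma hom_part_circle_helmholtz:
  "hom_part (dx_coeffs (dx_coeffs c)) m (cos t, sin t) + hom_part (dy_coeffs (dy_coeffs c)) m (cos t, sin t)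
     + lam * hom_part c m (cos t, sin t) = 0"
proof (rule powser_sums_zero_imp_coeffs_zero[OF radius_pos])
  fix s :: real assume s: "0 < s" "s < \<rho>"
  define y where "y = (s * cos t, s * sin t)"
  have y: "norm y < \<rho>" using s norm_polar_pair[of s t] by (simp add: y_def)
  have "(\<lambda>m. hom_part (dx_coeffs (dx_coeffs c)) m y + hom_part (dy_coeffs (dy_coeffs c)) m y
      + lam * hom_part c m y) sums (laplacian u (x0 + y) + lam * u (x0 + y))"
    unfolding laplacian_eq[OF y] expansion[OF y]
    by (intro sums_add sums_mult sums_on_ball y)
  then have "(\<lambda>m. hom_part (dx_coeffs (dx_coeffs c)) m y + hom_part (dy_coeffs (dy_coeffs c)) m y
      + lam * hom_part c m y) sums 0"
    by (simp only: helmholtz[OF y])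
  then show "(\<lambda>m. (hom_part (dx_coeffs (dx_coeffs c)) m (cos t, sin t)
      + hom_part (dy_coeffs (dy_coeffs c)) m (cos t, sin t) + lam * hom_part c m (cos t, sin t)) * s ^ m) sums 0"
    by (simp add: y_def hom_part_scale algebra_simps)
qed

lemma angular_deriv_singular_ray:
  assumes "singular_line \<Omega> u \<Gamma>" "\<Gamma> = closed_segment x0 (x0 + r *\<^sub>R (cos \<phi>, sin \<phi>))" "r > 0"
  shows "angular_deriv c m \<phi> = 0"
proof -
  obtain \<sigma> :: real where \<sigma>: "\<sigma> = 1 \<or> \<sigma> = -1"
    and normal: "\<And>x. x \<in> \<Gamma> \<Longrightarrow> dir_deriv u x (\<sigma> *\<^sub>R (- sin \<phi>, cos \<phi>)) = 0"
    using singular_ray_normal[OF assms] by blast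
  show ?thesis
  proof (rule powser_sums_zero_imp_coeffs_zero[of "min r \<rho>"])
    show "min r \<rho> > 0" using assms(3) radius_pos by simp
    fix s :: real assume s: "0 < s" "s < min r \<rho>"
    define y where "y = (s * cos \<phi>, s * sin \<phi>)"
    have y: "norm y < \<rho>" using s norm_polar_pair[of s \<phi>] by (simp add: y_def)
    have "x0 + y \<in> \<Gamma>" unfolding assms(2) in_segment
      by (rule exI[of _ "s / r"]) (use s assms(3) in \<open>auto simp: y_def prod_eq_iff field_simps\<close>)
    then have "dir_deriv u (x0 + y) (\<sigma> *\<^sub>R (- sin \<phi>, cos \<phi>)) = 0" by (rule normal)
    then have "\<sigma> * (double_series (dx_coeffs c) y * (- sin \<phi>) + double_series (dy_coeffs c) y * cos \<phi>) = 0"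
      by (simp add: dir_deriv_eq[OF y] algebra_simps)
    then have "double_series (dx_coeffs c) y * (- sin \<phi>) + double_series (dy_coeffs c) y * cos \<phi> = 0"
      using \<sigma> by auto
    moreover have "(\<lambda>m. hom_part (dx_coeffs c) m y * (- sin \<phi>) + hom_part (dy_coeffs c) m y * cos \<phi>) sums
        (double_series (dx_coeffs c) y * (- sin \<phi>) + double_series (dy_coeffs c) y * cos \<phi>)"
      by (intro sums_add sums_mult2 sums_on_ball y)
    ultimately have "(\<lambda>m. hom_part (dx_coeffs c) m y * (- sin \<phi>) + hom_part (dy_coeffs c) m y * cos \<phi>) sums 0"
      by simp
    then show "(\<lambda>m. angular_deriv c m \<phi> * s ^ m) sums 0"
      by (simp add: y_def hom_part_scale angular_deriv_def algebra_simps)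
  qed
qed

lemma hom_part_circle_eq_bessel_coeff:
  assumes "singular_line \<Omega> u \<Gamma>p" "\<Gamma>p = closed_segment x0 (x0 + rp *\<^sub>R (cos \<phi>, sin \<phi>))" "rp > 0"
    and "singular_line \<Omega> u \<Gamma>m"
      "\<Gamma>m = closed_segment x0 (x0 + rm *\<^sub>R (cos (\<phi> + \<alpha> * 2 * pi), sin (\<phi> + \<alpha> * 2 * pi)))" "rm > 0"
    and "\<alpha> \<notin> \<rat>"
  shows "hom_part c n (cos t, sin t) = bessel_coeff (u x0) lam n"
proof -
  define \<psi> where "\<psi> = \<phi> + \<alpha> * 2 * pi"
  have circle_constant: "hom_part c (Suc m) (cos t, sin t) = K / (real (Suc m))\<^sup>2"
    if "\<And>\<theta>. (angular_deriv c m has_real_derivative F \<theta>) (at \<theta>)"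
      "\<And>\<theta>. F \<theta> + (real (Suc m))\<^sup>2 * hom_part c (Suc m) (cos \<theta>, sin \<theta>) = K" for m F K t
  proof (rule hom_part_circle_constant[OF that])
    show "angular_deriv c m \<phi> = 0" by (rule angular_deriv_singular_ray[OF assms(1-3)])
    show "angular_deriv c m \<psi> = 0" by (rule angular_deriv_singular_ray[OF assms(4) assms(5)[folded \<psi>_def] assms(6)])
    show "sin (real (Suc m) * (\<psi> - \<phi>)) \<noteq> 0"
      using sin_irrational_turns_neq_0[OF assms(7), of "Suc m"] by (simp add: \<psi>_def)
  qed
  show ?thesis
  proof (induction n arbitrary: t rule: less_induct)
    case (less n)
    consider "n = 0" | "n = 1" | k where "n = Suc (Suc k)"
      by (metis One_nat_def not0_implies_Suc)
    then show ?case
    proof cases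
      case 1
      then show ?thesis using hom_part_0 by (simp add: bessel_coeff_def)
    next
      case 2
      then show ?thesis
        using circle_constant[OF has_real_derivative_angular_deriv_0, where K = 0 and t = t]
        by (simp add: bessel_coeff_def)
    next
      case 3
      have "angular_deriv2 c k \<theta> + (real (Suc (Suc k)))\<^sup>2 * hom_part c (Suc (Suc k)) (cos \<theta>, sin \<theta>)
          = - lam * bessel_coeff (u x0) lam k" for \<theta>
        using angular_deriv2_laplacian[of c k \<theta>] hom_part_circle_helmholtz[of k \<theta>] less[of k] 3
        by simp
      from circle_constant[OF has_real_derivative_angular_deriv this]
      show ?thesis using 3 by (simp add: bessel_coeff_Suc_Suc)
    qed
  qed
qed

end

lemma helmholtz_expansion_at:
  assumes "power_expansion_at u x0 c R" "open \<Omega>" "x0 \<in> \<Omega>" "\<forall>x\<in>\<Omega>. - laplacian u x = lam * u x"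
  obtains \<rho> where "helmholtz_expansion u lam x0 c \<rho>"
proof -
  have R: "R > 0"
    and expansion: "\<And>y. norm y < R \<Longrightarrow>
        summable (\<lambda>m. \<Sum>j\<le>m. \<bar>c m j\<bar> * \<bar>fst y\<bar> ^ j * \<bar>snd y\<bar> ^ (m - j)) \<and>
        (\<lambda>m. hom_part c m y) sums u (x0 + y)"
    using assms(1) unfolding power_expansion_at_def by auto
  obtain \<epsilon> where \<epsilon>: "\<epsilon> > 0" "ball x0 \<epsilon> \<subseteq> \<Omega>" using assms(2,3) open_contains_ball by blast
  define \<rho> where "\<rho> = min (R / 6) \<epsilon>"
  have \<rho>: "0 < \<rho>" "\<rho> \<le> R / 6" "\<rho> \<le> \<epsilon>" using R \<epsilon> by (auto simp: \<rho>_def)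
  show thesis
  proof (rule that, unfold_locales)
    show "0 < \<rho>" by (rule \<rho>(1))
    have "norm (2 * \<rho>, 2 * \<rho>) \<le> 4 * \<rho>" using norm_Pair_le[of "2 * \<rho>" "2 * \<rho>"] \<rho> by simp
    then have "summable (\<lambda>m. \<Sum>j\<le>m. \<bar>c m j\<bar> * \<bar>2 * \<rho>\<bar> ^ j * \<bar>2 * \<rho>\<bar> ^ (m - j))"
      using expansion[of "(2 * \<rho>, 2 * \<rho>)"] \<rho> R by simp
    moreover have "(\<Sum>j\<le>m. \<bar>c m j\<bar> * \<bar>2 * \<rho>\<bar> ^ j * \<bar>2 * \<rho>\<bar> ^ (m - j)) = coeff_abs_sum c m * (2 * \<rho>) ^ m"
      for m
      unfolding coeff_abs_sum_def sum_distrib_right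
    proof (rule sum.cong[OF refl])
      fix j assume "j \<in> {..m}"
      then have "(2 * \<rho>) ^ j * (2 * \<rho>) ^ (m - j) = (2 * \<rho>) ^ m"
        by (metis atMost_iff le_add_diff_inverse power_add)
      then show "\<bar>c m j\<bar> * \<bar>2 * \<rho>\<bar> ^ j * \<bar>2 * \<rho>\<bar> ^ (m - j) = \<bar>c m j\<bar> * (2 * \<rho>) ^ m"
        using \<rho>(1) by (simp add: mult.assoc)
    qed
    ultimately show "coeffs_abs_summable c (2 * \<rho>)" by (simp add: coeffs_abs_summable_def)
    fix y :: "real \<times> real" assume y: "norm y < \<rho>"
    then show "u (x0 + y) = double_series c y"
      using expansion[of y] \<rho> by (simp add: double_series_def sums_iff)
    have "x0 + y \<in> \<Omega>" using y \<rho> \<epsilon> by (auto simp: dist_norm)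
    then show "laplacian u (x0 + y) + lam * u (x0 + y) = 0" using assms(4) by force
  qed
qed

lemma pair_polar_coords: obtains r t :: real where "y = (r * cos t, r * sin t)"
proof -
  let ?z = "Complex (fst y) (snd y)"
  have "y = (Re (rcis (cmod ?z) (Arg ?z)), Im (rcis (cmod ?z) (Arg ?z)))"
    unfolding rcis_cmod_Arg by simp
  then show thesis by (intro that) (simp add: rcis_def)
qed

lemma vani_of_bessel_coeffs:
  assumes "c = (SOME c. \<exists>r. power_expansion_at u x0 c r)"
    and hom: "\<And>n r t. hom_part c n (r * cos t, r * sin t) = bessel_coeff (u x0) lam n * r ^ n"
  shows "vani u x0 = (if u x0 = 0 then \<infinity> else 0)"
proof -
  have vani: "vani u x0 = (if \<exists>m y. hom_part c m y \<noteq> 0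
      then enat (LEAST m. \<exists>y. hom_part c m y \<noteq> 0) else \<infinity>)"
    by (simp add: vani_def assms(1) Let_def)
  show ?thesis
  proof (cases "u x0 = 0")
    case True
    have "hom_part c m y = 0" for m y
      by (rule pair_polar_coords[of y]) (simp add: hom True bessel_coeff_def)
    then show ?thesis using vani True by simp
  next
    case False
    then have "hom_part c 0 (1, 0) \<noteq> 0" using hom[of 0 1 0] by (simp add: bessel_coeff_def)
    moreover from this have "(LEAST m. \<exists>y. hom_part c m y \<noteq> 0) = 0" by (intro Least_eq_0) blast
    ultimately show ?thesis using vani False by (auto simp: zero_enat_def)
  qed
qed

lemma bessel_profile_of_expansion:
  assumes "power_expansion_at u x0 c R"
    and hom: "\<And>n r t. hom_part c n (r * cos t, r * sin t) = bessel_coeff (u x0) lam n * r ^ n"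
    and "u x0 \<noteq> 0" "0 \<le> lam" "0 \<le> r" "r < R"
  shows "u (x0 + r *\<^sub>R (cos \<theta>, sin \<theta>)) = u x0 * bessel_J0 (sqrt lam * r)"
proof (rule bessel_coeff_series[OF _ assms(3,4)])
  have "norm (r * cos \<theta>, r * sin \<theta>) < R" using assms(5,6) norm_polar_pair[of r \<theta>] by simp
  then have "(\<lambda>n. hom_part c n (r * cos \<theta>, r * sin \<theta>)) sums u (x0 + (r * cos \<theta>, r * sin \<theta>))"
    using assms(1) by (simp add: power_expansion_at_def)
  then show "(\<lambda>n. bessel_coeff (u x0) lam n * r ^ n) sums u (x0 + r *\<^sub>R (cos \<theta>, sin \<theta>))"
    by (simp add: hom)
qed

theorem theorem2p4:
  fixes \<Omega> :: "(real \<times> real) set" and u :: "real \<times> real \<Rightarrow> real" and lam \<alpha> :: real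
    and \<Gamma>p \<Gamma>m :: "(real \<times> real) set" and x0 :: "real \<times> real"
  assumes "open \<Omega>" and "lam > 0"
    and "real_analytic_on \<Omega> u"
    and "(\<lambda>x. (u x)^2) integrable_on \<Omega>"
    and "\<forall>x\<in>\<Omega>. - laplacian u x = lam * u x"
    and "singular_line \<Omega> u \<Gamma>p" and "singular_line \<Omega> u \<Gamma>m"
    and "x0 \<in> \<Omega>" and "\<Gamma>p \<inter> \<Gamma>m = {x0}"
    and "0 < \<alpha>" and "\<alpha> < 1" and "\<alpha> \<notin> \<rat>"
    and "\<exists>\<phi> rp rm. rp > 0 \<and> rm > 0 \<and>
           \<Gamma>p = closed_segment x0 (x0 + rp *\<^sub>R (cos \<phi>, sin \<phi>)) \<and>
           \<Gamma>m = closed_segment x0 (x0 + rm *\<^sub>R (cos (\<phi> + \<alpha> * 2 * pi), sin (\<phi> + \<alpha> * 2 * pi)))"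
  shows "(u x0 \<noteq> 0 \<longrightarrow> vani u x0 = 0) \<and> (u x0 = 0 \<longrightarrow> vani u x0 = \<infinity>) \<and>
         (u x0 \<noteq> 0 \<longrightarrow> (\<exists>\<delta>>0. \<forall>r \<theta>. 0 \<le> r \<and> r < \<delta> \<longrightarrow>
             u (x0 + r *\<^sub>R (cos \<theta>, sin \<theta>)) = u x0 * bessel_J0 (sqrt lam * r)))"
proof -
  obtain \<phi> rp rm where rays: "rp > 0" "rm > 0"
    "\<Gamma>p = closed_segment x0 (x0 + rp *\<^sub>R (cos \<phi>, sin \<phi>))"
    "\<Gamma>m = closed_segment x0 (x0 + rm *\<^sub>R (cos (\<phi> + \<alpha> * 2 * pi), sin (\<phi> + \<alpha> * 2 * pi)))"
    using assms(13) by blast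
  define c where "c = (SOME c. \<exists>r. power_expansion_at u x0 c r)"
  obtain R where pe: "power_expansion_at u x0 c R"
    using someI_ex[of "\<lambda>c. \<exists>r. power_expansion_at u x0 c r"] assms(3,8)
    unfolding c_def real_analytic_on_def by blast
  obtain \<rho> where "helmholtz_expansion u lam x0 c \<rho>"
    using helmholtz_expansion_at[OF pe assms(1,8,5)] .
  then have hom: "hom_part c n (r * cos t, r * sin t) = bessel_coeff (u x0) lam n * r ^ n" for n r t
    using helmholtz_expansion.hom_part_circle_eq_bessel_coeff[OF _ assms(6) rays(3,1) assms(7) rays(4,2) assms(12)]
    by (simp add: hom_part_scale)
  have "vani u x0 = (if u x0 = 0 then \<infinity> else 0)"
    by (rule vani_of_bessel_coeffs[OF c_def hom])
  moreover have "u (x0 + r *\<^sub>R (cos \<theta>, sin \<theta>)) = u x0 * bessel_J0 (sqrt lam * r)"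
    if "u x0 \<noteq> 0" "0 \<le> r" "r < R" for r \<theta>
    using bessel_profile_of_expansion[OF pe hom that(1) _ that(2,3)] assms(2) by simp
  moreover have "R > 0" using pe by (simp add: power_expansion_at_def)
  ultimately show ?thesis by auto
qed

end
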